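(* Let $\alpha$ be a tame power series with pole order $\nu$, let $\mathbf B_\alpha$ be its Bernoulli operator (for any admissible choice of multi-power series), and let $f=\mathscr L(\varphi)$ with $\varphi\in\mathscr D(\mathscr L)$. Then: (i) $f\in\mathscr D(\mathbf B_\alpha)$; (ii) $\beta(u)\varphi(u)\in\mathscr D(\mathscr L)$ and $\mathbf B_\alpha f=\mathscr L(\beta(u)\varphi(u))$, where $\beta(u)=u^\nu\alpha(e^{-u})$; (iii) the series $\sum_{k\ge1}\frac{(-1)^{k+1}}{k}\Delta_1^kf(t)$ converges absolutely and locally uniformly in $t>0$ and its sum equals $f'(t)=\mathscr L(-u\varphi(u))(t)$. In particular $\mathbf B_\alpha$ maps $\{\mathscr L(\varphi):\varphi\in\mathscr D(\mathscr L)\}$ into itself.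
   Context: $\mathscr D(\mathscr L)$: measurable $\varphi:(0,\infty)\to\mathbb C$ integrable on every $(0,R)$ with $\int_0^\infty e^{-su}|\varphi(u)|du<\infty$ for all $\operatorname{Re}(s)>0$; $\mathscr L(\varphi)(t)=\int_0^\infty e^{-tu}\varphi(u)du$, $t>0$. Tame series: $\alpha(z)=\sum_{n\ge0}a_{n+1}z^n$ converging on the open unit disk, extending holomorphically to a punctured neighborhood of $z=1$ with a pole of order $\nu\ge0$ at $1$ ($\nu=0$: holomorphic at 1), such that $(z-1)^\nu\alpha(z)$ equals, on an open neighborhood of $(0,1]$, a multi-power series $\sum_{\mathbf i\in\mathbb Z^N_{\ge0}}c_{\mathbf i}\prod_{j}(z^{e_j}-1)^{i_j}$ ($N\ge1$, $e_j\in\mathbb Z_{>0}$) converging absolutely and uniformly there. Then $(-1)^\nu(\ln z)^\nu\alpha(z)$ also has such an expansion $\sum_{\mathbf i}c_{\mathbf i}\prod_j(z^{e_j}-1)^{i_j}$; fix one. For $g$ on $(0,\infty)$, $h>0$: $\mathbf E_hg(t)=g(t+h)$, $\Delta_h=\mathbf E_h-\mathrm{id}$, $\Delta_{\mathbf e}^{\mathbf i}=\Delta_{e_1}^{i_1}\cdots\Delta_{e_N}^{i_N}$. Bernoulli operator $\mathbf B_\alpha=\sum_{\mathbf i}c_{\mathbf i}\Delta_{\mathbf e}^{\mathbf i}$, with domain $\mathscr D(\mathbf B_\alpha)$ the functions $g:(0,\infty)\to\mathbb C$ for which $\sum_{\mathbf i}c_{\mathbf i}\Delta_{\mathbf e}^{\mathbf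 i}g(t)$ converges absolutely and locally uniformly in $t$; $\mathbf B_\alpha g$ is the sum. *)

theory Defs
  imports "HOL-Analysis.Analysis"
begin

definition laplace_dom :: "(real \<Rightarrow> complex) \<Rightarrow> bool" where
  "laplace_dom \<phi> \<longleftrightarrow>
     set_borel_measurable lborel {0<..} \<phi> \<and>
     (\<forall>R>0. set_integrable lborel {0<..<R} \<phi>) \<and>
     (\<forall>s::complex. Re s > 0 \<longrightarrow>
        set_integrable lborel {0<..} (\<lambda>u. exp (- s * of_real u) * \<phi> u))"

definition laplace :: "(real \<Rightarrow> complex) \<Rightarrow> real \<Rightarrow> complex" where
  "laplace \<phi> t = (LBINT u:{0<..}. exp (- of_real (t * u)) * \<phi> u)"

definition abs_unif_conv :: "'b set \<Rightarrow> 'a set \<Rightarrow> ('a \<Rightarrow> 'b \<Rightarrow> 'c::banach) \<Rightarrow> bool" where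
  "abs_unif_conv U I g \<longleftrightarrow>
     (\<forall>z\<in>U. (\<lambda>i. g i z) abs_summable_on I) \<and>
     (\<forall>\<epsilon>>0. \<exists>F. finite F \<and> F \<subseteq> I \<and>
        (\<forall>z\<in>U. (\<Sum>\<^sub>\<infinity>i\<in>I - F. norm (g i z)) < \<epsilon>))"

text \<open>Multi-indices in Z_{>=0}^N are functions nat => nat vanishing from N on.\<close>
definition mps_index :: "nat \<Rightarrow> (nat \<Rightarrow> nat) set" where
  "mps_index N = {i. \<forall>j\<ge>N. i j = 0}"

definition mps_term :: "nat \<Rightarrow> (nat \<Rightarrow> nat) \<Rightarrow> ((nat \<Rightarrow> nat) \<Rightarrow> complex)
    \<Rightarrow> (nat \<Rightarrow> nat) \<Rightarrow> complex \<Rightarrow> complex" where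
  "mps_term N e c i z = c i * (\<Prod>j<N. (z ^ e j - 1) ^ i j)"

text \<open>F equals (on U, away from the point 1 where F may be singular) the multi-power
  series with exponents e and coefficients c, converging absolutely and uniformly on the
  open neighbourhood U of (0,1].\<close>
definition mps_expansion :: "nat \<Rightarrow> (nat \<Rightarrow> nat) \<Rightarrow> ((nat \<Rightarrow> nat) \<Rightarrow> complex)
    \<Rightarrow> complex set \<Rightarrow> (complex \<Rightarrow> complex) \<Rightarrow> bool" where
  "mps_expansion N e c U F \<longleftrightarrow>
     open U \<and> of_real ` {0<..1} \<subseteq> U \<and> N \<ge> 1 \<and> (\<forall>j<N. e j > 0) \<and>
     abs_unif_conv U (mps_index N) (mps_term N e c) \<and>
     (\<forall>z\<in>U - {1}. F z = (\<Sum>\<^sub>\<infinity>i\<in>mps_index N. mps_term N e c i z))"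

definition tame :: "(complex \<Rightarrow> complex) \<Rightarrow> nat \<Rightarrow> bool" where
  "tame \<alpha> \<nu> \<longleftrightarrow>
     (\<exists>a::nat \<Rightarrow> complex. \<forall>z. norm z < 1 \<longrightarrow> (\<lambda>n. a (Suc n) * z ^ n) sums \<alpha> z) \<and>
     (\<exists>r>0. \<alpha> holomorphic_on (ball 0 1 \<union> ball 1 r) - {1} \<and>
        (\<exists>g. g holomorphic_on ball 1 r \<and>
             (\<forall>z\<in>ball 1 r - {1}. g z = (z - 1) ^ \<nu> * \<alpha> z) \<and>
             (\<nu> > 0 \<longrightarrow> g 1 \<noteq> 0))) \<and>
     (\<exists>N e c U. mps_expansion N e c U (\<lambda>z. (z - 1) ^ \<nu> * \<alpha> z))"

definition fdiff :: "real \<Rightarrow> (real \<Rightarrow> complex) \<Rightarrow> real \<Rightarrow> complex" where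
  "fdiff h g = (\<lambda>t. g (t + h) - g t)"

fun mdiff :: "nat \<Rightarrow> (nat \<Rightarrow> nat) \<Rightarrow> (nat \<Rightarrow> nat) \<Rightarrow> (real \<Rightarrow> complex) \<Rightarrow> real \<Rightarrow> complex" where
  "mdiff 0 e i g = g"
| "mdiff (Suc n) e i g = (fdiff (real (e n)) ^^ i n) (mdiff n e i g)"

definition bernoulli_dom :: "nat \<Rightarrow> (nat \<Rightarrow> nat) \<Rightarrow> ((nat \<Rightarrow> nat) \<Rightarrow> complex)
    \<Rightarrow> (real \<Rightarrow> complex) \<Rightarrow> bool" where
  "bernoulli_dom N e c g \<longleftrightarrow>
     (\<forall>K. compact K \<and> K \<subseteq> {0<..} \<longrightarrow>
        abs_unif_conv K (mps_index N) (\<lambda>i t. c i * mdiff N e i g t))"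

definition bernoulli_op :: "nat \<Rightarrow> (nat \<Rightarrow> nat) \<Rightarrow> ((nat \<Rightarrow> nat) \<Rightarrow> complex)
    \<Rightarrow> (real \<Rightarrow> complex) \<Rightarrow> real \<Rightarrow> complex" where
  "bernoulli_op N e c g t = (\<Sum>\<^sub>\<infinity>i\<in>mps_index N. c i * mdiff N e i g t)"

end

theory Submission
  imports Defs
begin

text \<open>
  Every quantity involved is a Laplace transform of \<phi> times a bounded continuous weight:
  \<Delta>_h multiplies the density by e^(-hu) - 1, so c_i \<Delta>_e^i f = L(w_i \<phi>) where w_i(u) is the i-th
  term of the multi-power series at z = e^(-u). As Ln e^(-u) = -u, these weights sum to \<beta>(u), and
  the weights of \<Sigma>_k (-1)^(k+1)/k \<Delta>_1^k sum to log e^(-u) = -u. Summation and integration may be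
  interchanged, uniformly for t \<ge> t0 > 0, once the tails of \<Sigma> |w_i| are dominated by functions
  whose integrals against e^(-t0 u) |\<phi>(u)| are small: for the Bernoulli weights the uniform
  convergence of the expansion on (0,1] yields small constants, for the logarithmic weights the
  tails of \<Sigma> (1 - e^(-u))^k/k = u tend to 0 under the integrable bound u. Finally f' = L(-u \<phi>)
  follows from |e^(-hu) - 1 + hu| \<le> (hu)^2/2 e^(|h|u).
\<close>

section \<open>Measurability and integrability on the half-line\<close>

lemma set_borel_measurable_continuous_mult:
  fixes v f :: "real \<Rightarrow> 'b::{real_normed_algebra, second_countable_topology}"
  assumes "A \<in> sets borel" "set_borel_measurable lborel A f" "continuous_on A v"
  shows "set_borel_measurable lborel A (\<lambda>u. v u * f u)"
proof -
  have "(\<lambda>x. indicator A x *\<^sub>R v x) \<in> borel_measurable lborel"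
    using borel_measurable_continuous_on_indicator[OF assms(1,3)] by simp
  moreover have "(\<lambda>x. indicator A x *\<^sub>R f x) \<in> borel_measurable lborel"
    using assms(2) by (simp add: set_borel_measurable_def)
  moreover have "(\<lambda>x. indicator A x *\<^sub>R (v x * f x)) = (\<lambda>x. (indicator A x *\<^sub>R v x) * (indicator A x *\<^sub>R f x))"
    by (auto simp: indicator_def)
  ultimately show ?thesis
    unfolding set_borel_measurable_def by (simp only:) (rule borel_measurable_times)
qed

lemma set_borel_measurable_norm:
  fixes f :: "'a \<Rightarrow> 'b::real_normed_vector"
  assumes "set_borel_measurable M A f"
  shows "set_borel_measurable M A (\<lambda>x. norm (f x))"
proof -
  have "(\<lambda>x. norm (indicator A x *\<^sub>R f x)) \<in> borel_measurable M"
    using assms unfolding set_borel_measurable_def by measurable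
  moreover have "(\<lambda>x. norm (indicator A x *\<^sub>R f x)) = (\<lambda>x. indicator A x *\<^sub>R norm (f x))"
    by (auto simp: indicator_def)
  ultimately show ?thesis unfolding set_borel_measurable_def by simp
qed

lemma set_integrable_bound_mult:
  fixes f g :: "'a \<Rightarrow> 'b::{banach, second_countable_topology}"
  assumes "set_integrable M A f" "set_borel_measurable M A g"
    and "\<And>x. x \<in> A \<Longrightarrow> norm (g x) \<le> C * norm (f x)"
  shows "set_integrable M A g"
proof (rule set_integrable_bound[where f="\<lambda>x. C *\<^sub>R f x"])
  show "set_integrable M A (\<lambda>x. C *\<^sub>R f x)"
    using assms(1) by (rule set_integrable_scaleR_right)
  have "norm (g x) \<le> norm (C *\<^sub>R f x)" if "x \<in> A" for x
  proof -
    have "C * norm (f x) \<le> \<bar>C\<bar> * norm (f x)" by (intro mult_right_mono) auto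
    then show ?thesis using assms(3)[OF that] by simp
  qed
  then show "AE x in M. x \<in> A \<longrightarrow> norm (g x) \<le> norm (C *\<^sub>R f x)" by auto
qed fact

lemma
  fixes f :: "'i \<Rightarrow> 'a \<Rightarrow> 'b::{banach, second_countable_topology}"
  assumes "finite G" "\<And>i. i \<in> G \<Longrightarrow> set_integrable M A (f i)"
  shows set_integrable_sum: "set_integrable M A (\<lambda>x. \<Sum>i\<in>G. f i x)"
    and set_integral_sum: "(LINT x:A|M. (\<Sum>i\<in>G. f i x)) = (\<Sum>i\<in>G. LINT x:A|M. f i x)"
proof -
  have "integrable M (\<lambda>x. indicator A x *\<^sub>R f i x)" if "i \<in> G" for i
    using assms(2)[OF that] by (simp add: set_integrable_def)
  then show "set_integrable M A (\<lambda>x. \<Sum>i\<in>G. f i x)"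
    and "(LINT x:A|M. (\<Sum>i\<in>G. f i x)) = (\<Sum>i\<in>G. LINT x:A|M. f i x)"
    unfolding set_integrable_def set_lebesgue_integral_def scaleR_sum_right
    by (auto simp: integral_sum)
qed

lemma laplace_dom_integrable:
  assumes "laplace_dom \<phi>" "t > 0"
  shows "set_integrable lborel {0<..} (\<lambda>u. exp (- of_real (t * u)) * \<phi> u)"
  using assms unfolding laplace_dom_def by (auto elim!: allE[of _ "of_real t"])

lemma laplace_dom_abs_integrable:
  assumes "laplace_dom \<phi>" "t > 0"
  shows "set_integrable lborel {0<..} (\<lambda>u. exp (- (t * u)) * norm (\<phi> u))"
  using set_integrable_norm[OF laplace_dom_integrable[OF assms]]
  by (simp add: norm_mult norm_exp_eq_Re)

lemma laplace_mult_left: "a * laplace \<phi> t = laplace (\<lambda>u. a * \<phi> u) t"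
  unfolding laplace_def set_integral_mult_right[symmetric] by (simp add: ac_simps)

lemma laplace_dom_mult_bounded:
  fixes v \<phi> :: "real \<Rightarrow> complex"
  assumes phi: "laplace_dom \<phi>" and v: "continuous_on {0<..} v"
    and B: "\<And>u. u > 0 \<Longrightarrow> norm (v u) \<le> B"
  shows "laplace_dom (\<lambda>u. v u * \<phi> u)"
  unfolding laplace_dom_def
proof (intro conjI allI impI)
  have m: "set_borel_measurable lborel {0<..} \<phi>" using phi by (simp add: laplace_dom_def)
  show vm: "set_borel_measurable lborel {0<..} (\<lambda>u. v u * \<phi> u)"
    by (rule set_borel_measurable_continuous_mult[OF _ m v]) simp
  have bound: "norm (a * (v u * \<phi> u)) \<le> B * norm (a * \<phi> u)" if "u > 0" for a u
  proof -
    have "norm (a * (v u * \<phi> u)) = norm (v u) * norm (a * \<phi> u)"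
      by (simp add: norm_mult ac_simps)
    also have "\<dots> \<le> B * norm (a * \<phi> u)"
      using B[OF that] by (rule mult_right_mono) simp
    finally show ?thesis .
  qed
  show "set_integrable lborel {0<..<R} (\<lambda>u. v u * \<phi> u)" if "R > 0" for R
  proof (rule set_integrable_bound_mult[where C=B])
    show "set_integrable lborel {0<..<R} \<phi>" using phi that by (simp add: laplace_dom_def)
    show "set_borel_measurable lborel {0<..<R} (\<lambda>u. v u * \<phi> u)"
      by (rule set_borel_measurable_subset[OF vm]) auto
  qed (use bound[where a=1] in auto)
  show "set_integrable lborel {0<..} (\<lambda>u. exp (- s * of_real u) * (v u * \<phi> u))" if "Re s > 0" for s
  proof (rule set_integrable_bound_mult[where C=B])
    show "set_integrable lborel {0<..} (\<lambda>u. exp (- s * of_real u) * \<phi> u)"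
      using phi that by (simp add: laplace_dom_def)
    show "set_borel_measurable lborel {0<..} (\<lambda>u. exp (- s * of_real u) * (v u * \<phi> u))"
      by (rule set_borel_measurable_continuous_mult[OF _ vm]) (auto intro!: continuous_intros)
  qed (use bound in auto)
qed

section \<open>Laplace transforms and difference operators\<close>

lemma mult_exp_neg_le:
  fixes \<sigma> u :: real
  assumes "\<sigma> > 0" "u \<ge> 0"
  shows "u * exp (- (\<sigma> * u)) \<le> 2 / \<sigma> * exp (- (\<sigma> * u / 2))"
proof -
  have "\<sigma> * u / 2 \<le> exp (\<sigma> * u / 2)" using exp_ge_add_one_self[of "\<sigma> * u / 2"] by linarith
  then have "u \<le> 2 / \<sigma> * exp (\<sigma> * u / 2)" using assms by (simp add: field_simps)
  then have "u * exp (- (\<sigma> * u)) \<le> 2 / \<sigma> * exp (\<sigma> * u / 2) * exp (- (\<sigma> * u))"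
    by (rule mult_right_mono) simp
  also have "\<dots> = 2 / \<sigma> * exp (- (\<sigma> * u / 2))"
    by (simp add: mult.assoc flip: exp_add)
  finally show ?thesis .
qed

lemma laplace_dom_times_minus_u:
  assumes phi: "laplace_dom \<phi>"
  shows "laplace_dom (\<lambda>u. - of_real u * \<phi> u)"
  unfolding laplace_dom_def
proof (intro conjI allI impI)
  have m: "set_borel_measurable lborel {0<..} \<phi>" using phi by (simp add: laplace_dom_def)
  show um: "set_borel_measurable lborel {0<..} (\<lambda>u. - of_real u * \<phi> u)"
    by (rule set_borel_measurable_continuous_mult[OF _ m]) (auto intro!: continuous_intros)
  show "set_integrable lborel {0<..<R} (\<lambda>u. - of_real u * \<phi> u)" if "R > 0" for R
  proof (rule set_integrable_bound_mult[where C=R])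
    show "set_integrable lborel {0<..<R} \<phi>" using phi that by (simp add: laplace_dom_def)
    show "set_borel_measurable lborel {0<..<R} (\<lambda>u. - of_real u * \<phi> u)"
      by (rule set_borel_measurable_subset[OF um]) auto
  qed (auto simp: norm_mult intro!: mult_right_mono)
  show "set_integrable lborel {0<..} (\<lambda>u. exp (- s * of_real u) * (- of_real u * \<phi> u))"
    if s: "Re s > 0" for s
  \<comment> \<open>the factor u is absorbed by half of the decay of e^{-su}\<close>
  proof (rule set_integrable_bound_mult[where C="2 / Re s"])
    have "Re (s/2) > 0" using s by simp
    then show "set_integrable lborel {0<..} (\<lambda>u. exp (- (s/2) * of_real u) * \<phi> u)"
      using phi unfolding laplace_dom_def by blast
    show "set_borel_measurable lborel {0<..} (\<lambda>u. exp (- s * of_real u) * (- of_real u * \<phi> u))"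
      by (rule set_borel_measurable_continuous_mult[OF _ um]) (auto intro!: continuous_intros)
    fix u :: real assume "u \<in> {0<..}"
    then have "u * exp (- (Re s * u)) * norm (\<phi> u) \<le> 2 / Re s * exp (- (Re s * u / 2)) * norm (\<phi> u)"
      using s by (intro mult_right_mono mult_exp_neg_le) auto
    then show "norm (exp (- s * of_real u) * (- of_real u * \<phi> u))
        \<le> 2 / Re s * norm (exp (- (s/2) * of_real u) * \<phi> u)"
      using \<open>u \<in> {0<..}\<close> by (simp add: norm_mult mult_ac)
  qed
qed

lemma norm_of_real_exp_minus_one:
  assumes "x \<le> 0"
  shows "norm (of_real (exp x) - 1 :: complex) = 1 - exp x"
proof -
  have "(of_real (exp x) - 1 :: complex) = of_real (exp x - 1)" by simp
  then show ?thesis using assms by (simp only: norm_of_real) simp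
qed

lemma norm_exp_minus_one_le_one: "x \<le> 0 \<Longrightarrow> norm (of_real (exp x) - 1 :: complex) \<le> 1"
  by (simp add: norm_of_real_exp_minus_one)

lemma fdiff_apply: "fdiff h g t = g (t + h) - g t"
  by (simp add: fdiff_def)

lemma fdiff_laplace:
  assumes phi: "laplace_dom \<phi>" and "h \<ge> 0" "t > 0"
  shows "fdiff h (laplace \<phi>) t = laplace (\<lambda>u. (of_real (exp (- h * u)) - 1) * \<phi> u) t"
proof -
  have exp_shift: "exp (- of_real ((t + h) * u)) = exp (- of_real (t * u)) * (of_real (exp (- h * u)) :: complex)"
    for u
    by (simp add: algebra_simps flip: exp_add exp_of_real)
  have "fdiff h (laplace \<phi>) t
      = (LBINT u:{0<..}. exp (- of_real ((t + h) * u)) * \<phi> u - exp (- of_real (t * u)) * \<phi> u)"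
    unfolding fdiff_apply laplace_def using assms
    by (intro set_integral_diff(2)[symmetric] laplace_dom_integrable) auto
  also have "\<dots> = laplace (\<lambda>u. (of_real (exp (- h * u)) - 1) * \<phi> u) t"
    unfolding laplace_def exp_shift by (simp add: algebra_simps)
  finally show ?thesis .
qed

lemma fdiff_power_laplace:
  assumes phi: "laplace_dom \<phi>" and h: "h \<ge> 0"
    and g: "\<And>s. s > 0 \<Longrightarrow> g s = laplace \<phi> s" and "t > 0"
  shows "(fdiff h ^^ k) g t = laplace (\<lambda>u. (of_real (exp (- h * u)) - 1) ^ k * \<phi> u) t"
  using \<open>t > 0\<close>
proof (induction k arbitrary: t)
  case 0
  then show ?case using g by simp
next
  case (Suc k)
  let ?d = "\<lambda>u. of_real (exp (- h * u)) - 1 :: complex"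
  have "laplace_dom (\<lambda>u. ?d u ^ k * \<phi> u)"
    using norm_exp_minus_one_le_one h
    by (intro laplace_dom_mult_bounded[OF phi, where B=1])
       (auto intro!: continuous_intros simp: norm_power power_le_one)
  moreover have "(fdiff h ^^ Suc k) g t = fdiff h (laplace (\<lambda>u. ?d u ^ k * \<phi> u)) t"
  proof -
    have "(fdiff h ^^ Suc k) g t = (fdiff h ^^ k) g (t + h) - (fdiff h ^^ k) g t"
      by (simp only: funpow.simps comp_apply fdiff_apply)
    also have "\<dots> = fdiff h (laplace (\<lambda>u. ?d u ^ k * \<phi> u)) t"
      using Suc h by (simp only: Suc.IH fdiff_apply)
    finally show ?thesis .
  qed
  ultimately show ?case
    using h Suc by (simp add: fdiff_laplace mult.assoc)
qed

lemma mdiff_laplace: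
  assumes phi: "laplace_dom \<phi>" and "t > 0"
  shows "mdiff n e i (laplace \<phi>) t
    = laplace (\<lambda>u. (\<Prod>j<n. (of_real (exp (- real (e j) * u)) - 1) ^ i j) * \<phi> u) t"
  using \<open>t > 0\<close>
proof (induction n arbitrary: t)
  case 0
  then show ?case by simp
next
  case (Suc n)
  let ?P = "\<lambda>u. (\<Prod>j<n. (of_real (exp (- real (e j) * u)) - 1 :: complex) ^ i j)"
  have "norm (?P u) \<le> 1" if "u > 0" for u
    unfolding prod_norm[symmetric] norm_power using that
    by (intro prod_le_1) (auto intro!: power_le_one norm_exp_minus_one_le_one)
  then have "laplace_dom (\<lambda>u. ?P u * \<phi> u)"
    by (intro laplace_dom_mult_bounded[OF phi]) (auto intro!: continuous_intros)
  then show ?case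
    using Suc by (simp add: fdiff_power_laplace ac_simps)
qed

section \<open>Series of Laplace transforms\<close>

lemma norm_laplace_le:
  assumes "set_integrable lborel {0<..} (\<lambda>u. exp (- of_real (t * u)) * \<psi> u)"
    and "set_integrable lborel {0<..} B"
    and "\<And>u. u > 0 \<Longrightarrow> norm (exp (- of_real (t * u)) * \<psi> u) \<le> B u"
  shows "norm (laplace \<psi> t) \<le> (LBINT u:{0<..}. B u)"
proof -
  have "norm (laplace \<psi> t) \<le> (LBINT u:{0<..}. norm (exp (- of_real (t * u)) * \<psi> u))"
    unfolding laplace_def by (rule set_integral_norm_bound[OF assms(1)])
  also have "\<dots> \<le> (LBINT u:{0<..}. B u)"
    using assms by (intro set_integral_mono set_integrable_norm) auto
  finally show ?thesis .
qed

lemma has_sum_tail_bound: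
  fixes w :: "'i \<Rightarrow> 'a::banach"
  assumes "(w has_sum W) I" "finite Y" "F \<subseteq> Y" "Y \<subseteq> I"
    and "\<And>G. finite G \<Longrightarrow> G \<subseteq> I - F \<Longrightarrow> (\<Sum>i\<in>G. norm (w i)) \<le> d"
  shows "norm ((\<Sum>i\<in>Y. w i) - W) \<le> d"
proof -
  have bound: "(\<Sum>i\<in>G. norm (w i)) \<le> d" if "finite G" "G \<subseteq> I - Y" for G
    using assms(3,5) that by blast
  have summable: "(\<lambda>i. norm (w i)) summable_on (I - Y)"
    using bound by (intro nonneg_bdd_above_summable_on bdd_aboveI2) auto
  have "((\<Sum>i\<in>Y. w i) - W) = - (\<Sum>\<^sub>\<infinity>i\<in>I - Y. w i)"
    using infsumI[OF has_sum_Diff[OF assms(1) has_sum_finite[OF assms(2)] assms(4)]] by simp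
  then have "norm ((\<Sum>i\<in>Y. w i) - W) \<le> (\<Sum>\<^sub>\<infinity>i\<in>I - Y. norm (w i))"
    using norm_infsum_bound[OF summable] by simp
  also have "\<dots> \<le> d" by (rule infsum_le_finite_sums[OF summable bound])
  finally show ?thesis .
qed

locale laplace_series =
  fixes \<phi> :: "real \<Rightarrow> complex" and t0 :: real and I :: "'i set" and w :: "'i \<Rightarrow> real \<Rightarrow> complex"
  assumes laplace_dom: "laplace_dom \<phi>" and t0_pos: "t0 > 0"
    and weight_continuous: "\<And>i. i \<in> I \<Longrightarrow> continuous_on {0<..} (w i)"
    and weight_bounded: "\<And>i. i \<in> I \<Longrightarrow> \<exists>B. \<forall>u>0. norm (w i u) \<le> B"
    and tails: "\<And>\<epsilon>. \<epsilon> > 0 \<Longrightarrow> \<exists>F D. finite F \<and> F \<subseteq> I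
        \<and> set_integrable lborel {0<..} (\<lambda>u. exp (- (t0 * u)) * norm (\<phi> u) * D u)
        \<and> (LBINT u:{0<..}. exp (- (t0 * u)) * norm (\<phi> u) * D u) < \<epsilon>
        \<and> (\<forall>u>0. \<forall>G. finite G \<and> G \<subseteq> I - F \<longrightarrow> (\<Sum>i\<in>G. norm (w i u)) \<le> D u)"
begin

lemma term_integrable:
  assumes "i \<in> I" "t > 0"
  shows "set_integrable lborel {0<..} (\<lambda>u. exp (- of_real (t * u)) * (w i u * \<phi> u))"
proof -
  obtain B where "\<forall>u>0. norm (w i u) \<le> B" using weight_bounded[OF assms(1)] by blast
  then have "laplace_dom (\<lambda>u. w i u * \<phi> u)"
    using weight_continuous[OF assms(1)] by (intro laplace_dom_mult_bounded[OF laplace_dom]) auto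
  then show ?thesis using assms(2) by (rule laplace_dom_integrable)
qed

lemma exp_weight_mono:
  assumes "t \<ge> t0" "u > 0" "0 \<le> d"
  shows "exp (- (t * u)) * norm (\<phi> u) * d \<le> exp (- (t0 * u)) * norm (\<phi> u) * d"
  using assms by (intro mult_right_mono) (auto intro!: mult_right_mono)

lemma sum_norm_laplace_le:
  assumes t: "t \<ge> t0" and G: "finite G" "G \<subseteq> I"
    and D: "set_integrable lborel {0<..} (\<lambda>u. exp (- (t0 * u)) * norm (\<phi> u) * D u)"
    and dominated: "\<And>u. u > 0 \<Longrightarrow> (\<Sum>i\<in>G. norm (w i u)) \<le> D u"
  shows "(\<Sum>i\<in>G. norm (laplace (\<lambda>u. w i u * \<phi> u) t))
    \<le> (LBINT u:{0<..}. exp (- (t0 * u)) * norm (\<phi> u) * D u)"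
proof -
  let ?n = "\<lambda>i u. norm (exp (- of_real (t * u)) * (w i u * \<phi> u))"
  have t_pos: "t > 0" using t t0_pos by simp
  have integrable: "set_integrable lborel {0<..} (?n i)" if "i \<in> G" for i
    using that G t_pos by (intro set_integrable_norm term_integrable) auto
  have "(\<Sum>i\<in>G. norm (laplace (\<lambda>u. w i u * \<phi> u) t)) \<le> (\<Sum>i\<in>G. LBINT u:{0<..}. ?n i u)"
    unfolding laplace_def using G t_pos
    by (intro sum_mono set_integral_norm_bound term_integrable) auto
  also have "\<dots> = (LBINT u:{0<..}. (\<Sum>i\<in>G. ?n i u))"
    using G integrable by (intro set_integral_sum[symmetric])
  also have "\<dots> \<le> (LBINT u:{0<..}. exp (- (t0 * u)) * norm (\<phi> u) * D u)"
  proof (intro set_integral_mono set_integrable_sum integrable D G)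
    fix u :: real assume u: "u \<in> {0<..}"
    have "(\<Sum>i\<in>G. ?n i u) = exp (- (t * u)) * norm (\<phi> u) * (\<Sum>i\<in>G. norm (w i u))"
      by (simp add: norm_mult sum_distrib_left mult_ac flip: of_real_minus)
    also have "\<dots> \<le> exp (- (t * u)) * norm (\<phi> u) * D u"
      using u by (intro mult_left_mono dominated) auto
    also have "\<dots> \<le> exp (- (t0 * u)) * norm (\<phi> u) * D u"
      using u dominated[of u] sum_nonneg[of G "\<lambda>i. norm (w i u)"]
      by (intro exp_weight_mono t) auto
    finally show "(\<Sum>i\<in>G. ?n i u) \<le> exp (- (t0 * u)) * norm (\<phi> u) * D u" .
  qed
  finally show ?thesis .
qed

theorem abs_unif_conv_laplace:
  "abs_unif_conv {t0..} I (\<lambda>i t. laplace (\<lambda>u. w i u * \<phi> u) t)"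
proof -
  let ?L = "\<lambda>i t. laplace (\<lambda>u. w i u * \<phi> u) t"
  have tail_le: "(\<Sum>i\<in>G. norm (?L i t)) \<le> (LBINT u:{0<..}. exp (- (t0 * u)) * norm (\<phi> u) * D u)"
    if "t \<ge> t0" "finite G" "G \<subseteq> I - F" "finite F" "F \<subseteq> I"
      "set_integrable lborel {0<..} (\<lambda>u. exp (- (t0 * u)) * norm (\<phi> u) * D u)"
      "\<forall>u>0. \<forall>G. finite G \<and> G \<subseteq> I - F \<longrightarrow> (\<Sum>i\<in>G. norm (w i u)) \<le> D u"
    for t G F D
    using that by (intro sum_norm_laplace_le) auto
  obtain F1 D1 where F1: "finite F1" "F1 \<subseteq> I"
    "set_integrable lborel {0<..} (\<lambda>u. exp (- (t0 * u)) * norm (\<phi> u) * D1 u)"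
    "\<forall>u>0. \<forall>G. finite G \<and> G \<subseteq> I - F1 \<longrightarrow> (\<Sum>i\<in>G. norm (w i u)) \<le> D1 u"
    using tails[of 1] by auto
  have summable: "(\<lambda>i. norm (?L i t)) summable_on I" if t: "t \<ge> t0" for t
  proof (intro nonneg_bdd_above_summable_on bdd_aboveI2)
    fix G assume G: "G \<in> {G. G \<subseteq> I \<and> finite G}"
    have "sum (\<lambda>i. norm (?L i t)) G
        = sum (\<lambda>i. norm (?L i t)) (G \<inter> F1) + sum (\<lambda>i. norm (?L i t)) (G - F1)"
      using G by (simp add: sum.Int_Diff)
    also have "\<dots> \<le> sum (\<lambda>i. norm (?L i t)) F1
        + (LBINT u:{0<..}. exp (- (t0 * u)) * norm (\<phi> u) * D1 u)"
      using G F1 t by (intro add_mono sum_mono2 tail_le) auto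
    finally show "sum (\<lambda>i. norm (?L i t)) G \<le> \<dots>" .
  qed simp
  show ?thesis unfolding abs_unif_conv_def
  proof (intro conjI ballI allI impI)
    fix \<epsilon> :: real assume "\<epsilon> > 0"
    then obtain F D where F: "finite F" "F \<subseteq> I"
      "set_integrable lborel {0<..} (\<lambda>u. exp (- (t0 * u)) * norm (\<phi> u) * D u)"
      "(LBINT u:{0<..}. exp (- (t0 * u)) * norm (\<phi> u) * D u) < \<epsilon>"
      "\<forall>u>0. \<forall>G. finite G \<and> G \<subseteq> I - F \<longrightarrow> (\<Sum>i\<in>G. norm (w i u)) \<le> D u"
      using tails by meson
    have "(\<Sum>\<^sub>\<infinity>i\<in>I - F. norm (?L i t)) < \<epsilon>" if t: "t \<in> {t0..}" for t
    proof -
      have "(\<Sum>\<^sub>\<infinity>i\<in>I - F. norm (?L i t)) \<le> (LBINT u:{0<..}. exp (- (t0 * u)) * norm (\<phi> u) * D u)"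
        using F t summable_on_subset_banach[OF summable[of t], of "I - F"]
        by (intro infsum_le_finite_sums tail_le) auto
      then show ?thesis using F(4) by linarith
    qed
    then show "\<exists>F. finite F \<and> F \<subseteq> I \<and> (\<forall>t\<in>{t0..}. (\<Sum>\<^sub>\<infinity>i\<in>I - F. norm (?L i t)) < \<epsilon>)"
      using F(1,2) by blast
  qed (use summable in auto)
qed

lemma laplace_sum_minus:
  assumes "finite Y" "Y \<subseteq> I" "t > 0" and W: "laplace_dom (\<lambda>u. W u * \<phi> u)"
  shows "(\<Sum>i\<in>Y. laplace (\<lambda>u. w i u * \<phi> u) t) - laplace (\<lambda>u. W u * \<phi> u) t
    = laplace (\<lambda>u. ((\<Sum>i\<in>Y. w i u) - W u) * \<phi> u) t"
    and "set_integrable lborel {0<..}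
      (\<lambda>u. exp (- of_real (t * u)) * (((\<Sum>i\<in>Y. w i u) - W u) * \<phi> u))"
proof -
  let ?e = "\<lambda>u. exp (- of_real (t * u)) :: complex"
  have sum_int: "set_integrable lborel {0<..} (\<lambda>u. \<Sum>i\<in>Y. ?e u * (w i u * \<phi> u))"
    using assms by (intro set_integrable_sum term_integrable) auto
  have W_int: "set_integrable lborel {0<..} (\<lambda>u. ?e u * (W u * \<phi> u))"
    using laplace_dom_integrable[OF W assms(3)] .
  have eq: "(\<Sum>i\<in>Y. ?e u * (w i u * \<phi> u)) - ?e u * (W u * \<phi> u)
      = ?e u * (((\<Sum>i\<in>Y. w i u) - W u) * \<phi> u)" for u
    by (simp add: sum_distrib_left sum_distrib_right algebra_simps)
  show "set_integrable lborel {0<..} (\<lambda>u. ?e u * (((\<Sum>i\<in>Y. w i u) - W u) * \<phi> u))"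
    using set_integral_diff(1)[OF sum_int W_int] unfolding eq .
  have "(\<Sum>i\<in>Y. laplace (\<lambda>u. w i u * \<phi> u) t) = (LBINT u:{0<..}. \<Sum>i\<in>Y. ?e u * (w i u * \<phi> u))"
    unfolding laplace_def using assms by (intro set_integral_sum[symmetric] term_integrable) auto
  then have "(\<Sum>i\<in>Y. laplace (\<lambda>u. w i u * \<phi> u) t) - laplace (\<lambda>u. W u * \<phi> u) t
      = (LBINT u:{0<..}. (\<Sum>i\<in>Y. ?e u * (w i u * \<phi> u)) - ?e u * (W u * \<phi> u))"
    unfolding laplace_def set_integral_diff(2)[OF sum_int W_int] by simp
  then show "(\<Sum>i\<in>Y. laplace (\<lambda>u. w i u * \<phi> u) t) - laplace (\<lambda>u. W u * \<phi> u) t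
    = laplace (\<lambda>u. ((\<Sum>i\<in>Y. w i u) - W u) * \<phi> u) t"
    unfolding eq laplace_def .
qed

theorem has_sum_laplace:
  assumes W: "laplace_dom (\<lambda>u. W u * \<phi> u)"
    and sums: "\<And>u. u > 0 \<Longrightarrow> ((\<lambda>i. w i u) has_sum W u) I"
    and t: "t \<ge> t0"
  shows "((\<lambda>i. laplace (\<lambda>u. w i u * \<phi> u) t) has_sum laplace (\<lambda>u. W u * \<phi> u) t) I"
  unfolding has_sum_def tendsto_iff eventually_finite_subsets_at_top
proof (intro allI impI)
  fix \<epsilon> :: real assume "\<epsilon> > 0"
  then obtain F D where F: "finite F" "F \<subseteq> I"
    "set_integrable lborel {0<..} (\<lambda>u. exp (- (t0 * u)) * norm (\<phi> u) * D u)"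
    "(LBINT u:{0<..}. exp (- (t0 * u)) * norm (\<phi> u) * D u) < \<epsilon>"
    "\<forall>u>0. \<forall>G. finite G \<and> G \<subseteq> I - F \<longrightarrow> (\<Sum>i\<in>G. norm (w i u)) \<le> D u"
    using tails by meson
  have t_pos: "t > 0" using t t0_pos by simp
  have "dist (\<Sum>i\<in>Y. laplace (\<lambda>u. w i u * \<phi> u) t) (laplace (\<lambda>u. W u * \<phi> u) t) < \<epsilon>"
    if Y: "finite Y" "F \<subseteq> Y" "Y \<subseteq> I" for Y
  proof -
    have "dist (\<Sum>i\<in>Y. laplace (\<lambda>u. w i u * \<phi> u) t) (laplace (\<lambda>u. W u * \<phi> u) t)
        = norm (laplace (\<lambda>u. ((\<Sum>i\<in>Y. w i u) - W u) * \<phi> u) t)"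
      using Y t_pos W by (simp add: dist_norm laplace_sum_minus)
    also have "\<dots> \<le> (LBINT u:{0<..}. exp (- (t0 * u)) * norm (\<phi> u) * D u)"
    proof (rule norm_laplace_le[OF laplace_sum_minus(2)[OF Y(1,3) t_pos W] F(3)])
      fix u :: real assume u: "u > 0"
      have tail: "norm ((\<Sum>i\<in>Y. w i u) - W u) \<le> D u"
        using F(5) u Y by (intro has_sum_tail_bound[OF sums]) auto
      have "norm (exp (- of_real (t * u)) * (((\<Sum>i\<in>Y. w i u) - W u) * \<phi> u))
          = exp (- (t * u)) * norm (\<phi> u) * norm ((\<Sum>i\<in>Y. w i u) - W u)"
        by (simp add: norm_mult mult_ac flip: of_real_minus)
      also have "\<dots> \<le> exp (- (t0 * u)) * norm (\<phi> u) * D u"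
        using tail u order_trans[OF norm_ge_zero tail]
        by (intro order.trans[OF mult_left_mono exp_weight_mono] t) auto
      finally show "norm (exp (- of_real (t * u)) * (((\<Sum>i\<in>Y. w i u) - W u) * \<phi> u))
          \<le> exp (- (t0 * u)) * norm (\<phi> u) * D u" .
    qed
    finally show ?thesis using F(4) by linarith
  qed
  then show "\<exists>X. finite X \<and> X \<subseteq> I \<and> (\<forall>Y. finite Y \<and> X \<subseteq> Y \<and> Y \<subseteq> I \<longrightarrow>
      dist (\<Sum>i\<in>Y. laplace (\<lambda>u. w i u * \<phi> u) t) (laplace (\<lambda>u. W u * \<phi> u) t) < \<epsilon>)"
    using F(1,2) by blast
qed

end

lemma abs_unif_conv_subset_cong:
  assumes "abs_unif_conv U I g" "K \<subseteq> U" "\<And>i t. i \<in> I \<Longrightarrow> t \<in> K \<Longrightarrow> g' i t = g i t"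
  shows "abs_unif_conv K I g'"
proof -
  have "(\<lambda>i. norm (g' i t)) summable_on I \<longleftrightarrow> (\<lambda>i. norm (g i t)) summable_on I"
    and "(\<Sum>\<^sub>\<infinity>i\<in>I - F. norm (g' i t)) = (\<Sum>\<^sub>\<infinity>i\<in>I - F. norm (g i t))" if "t \<in> K" for t F
    using assms(3) that by (auto intro!: summable_on_cong infsum_cong)
  with assms(1,2) show ?thesis unfolding abs_unif_conv_def by (metis subsetD)
qed

lemma abs_unif_conv_laplace_compact:
  assumes series: "\<And>t0. t0 > 0 \<Longrightarrow> laplace_series \<phi> t0 I w"
    and g: "\<And>i t. i \<in> I \<Longrightarrow> t > 0 \<Longrightarrow> g i t = laplace (\<lambda>u. w i u * \<phi> u) t"
    and K: "compact K" "K \<subseteq> {0<..}"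
  shows "abs_unif_conv K I g"
proof (cases "K = {}")
  case True
  then show ?thesis by (auto simp: abs_unif_conv_def intro!: exI[of _ "{}"])
next
  case False
  then obtain t0 where t0: "t0 \<in> K" "\<forall>t\<in>K. t0 \<le> t" using compact_attains_inf[OF K(1)] by blast
  then have "t0 > 0" using K(2) by auto
  then show ?thesis
    using t0 K(2) g
    by (intro abs_unif_conv_subset_cong[OF laplace_series.abs_unif_conv_laplace[OF series]]) auto
qed

lemma infsum_laplace_series:
  assumes "laplace_series \<phi> t I w" "laplace_dom (\<lambda>u. W u * \<phi> u)"
    and "\<And>u. u > 0 \<Longrightarrow> ((\<lambda>i. w i u) has_sum W u) I"
    and "\<And>i. i \<in> I \<Longrightarrow> g i = laplace (\<lambda>u. w i u * \<phi> u) t"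
  shows "(\<Sum>\<^sub>\<infinity>i\<in>I. g i) = laplace (\<lambda>u. W u * \<phi> u) t"
proof -
  have "((\<lambda>i. laplace (\<lambda>u. w i u * \<phi> u) t) has_sum laplace (\<lambda>u. W u * \<phi> u) t) I"
    using assms(2,3) by (intro laplace_series.has_sum_laplace[OF assms(1)]) auto
  then show ?thesis using assms(4) by (simp add: infsumI cong: infsum_cong)
qed

section \<open>The derivative\<close>

lemma abs_exp_minus_one_minus_le:
  fixes x :: real
  shows "\<bar>exp x - 1 - x\<bar> \<le> x\<^sup>2 / 2 * exp \<bar>x\<bar>"
proof -
  obtain s where s: "\<bar>s\<bar> \<le> \<bar>x\<bar>" "exp x = (\<Sum>m<2. x ^ m / fact m) + exp s / fact 2 * x ^ 2"
    using Maclaurin_exp_le[of x 2] by blast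
  then have "\<bar>exp x - 1 - x\<bar> = exp s / 2 * x\<^sup>2" by (simp add: numeral_2_eq_2)
  also have "\<dots> \<le> exp \<bar>x\<bar> / 2 * x\<^sup>2" using s(1) by (intro mult_right_mono) auto
  finally show ?thesis by (simp add: mult.commute)
qed

lemma square_mult_exp_le:
  fixes t u :: real
  assumes "t > 0" "u \<ge> 0"
  shows "u\<^sup>2 * exp (- (t * u / 2)) \<le> 64 / t\<^sup>2 * exp (- (t * u / 4))"
proof -
  have "u * exp (- (t / 4 * u)) \<le> 2 / (t / 4) * exp (- (t / 4 * u / 2))"
    using assms by (intro mult_exp_neg_le) auto
  then have "(u * exp (- (t / 4 * u)))\<^sup>2 \<le> (8 / t * exp (- (t * u / 8)))\<^sup>2"
    using assms by (intro power_mono) auto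
  moreover have "(exp y)\<^sup>2 = exp (2 * y)" for y :: real
    by (simp add: power2_eq_square flip: exp_add)
  ultimately show ?thesis by (simp add: power_mult_distrib power_divide)
qed

lemma laplace_first_order_remainder:
  assumes phi: "laplace_dom \<phi>" and t: "t > 0" "t + h > 0"
  defines "R \<equiv> \<lambda>u. exp (- of_real (t * u)) * (of_real (exp (- h * u) - 1 + h * u) * \<phi> u)"
  shows "set_integrable lborel {0<..} R"
    and "laplace \<phi> (t + h) - laplace \<phi> t - h *\<^sub>R laplace (\<lambda>u. - of_real u * \<phi> u) t
      = (LBINT u:{0<..}. R u)"
proof -
  let ?e = "\<lambda>s u. exp (- of_real (s * u)) :: complex"
  have shift: "?e (t + h) u = ?e t u * of_real (exp (- h * u))" for u
    by (simp add: algebra_simps flip: exp_add exp_of_real)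
  have eq: "(\<lambda>u. ?e (t + h) u * \<phi> u - ?e t u * \<phi> u - of_real h * (?e t u * (- of_real u * \<phi> u))) = R"
    unfolding R_def shift by (auto simp: algebra_simps)
  have i1: "set_integrable lborel {0<..} (\<lambda>u. ?e (t + h) u * \<phi> u)"
    and i2: "set_integrable lborel {0<..} (\<lambda>u. ?e t u * \<phi> u)"
    and i3: "set_integrable lborel {0<..} (\<lambda>u. ?e t u * (- of_real u * \<phi> u))"
    using laplace_dom_integrable[OF phi t(2)] laplace_dom_integrable[OF phi t(1)]
      laplace_dom_integrable[OF laplace_dom_times_minus_u[OF phi] t(1)] by simp_all
  have int1: "set_integrable lborel {0<..} (\<lambda>u. ?e (t + h) u * \<phi> u - ?e t u * \<phi> u)"
    using i1 i2 by (rule set_integral_diff)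
  have int2: "set_integrable lborel {0<..} (\<lambda>u. of_real h * (?e t u * (- of_real u * \<phi> u)))"
    using i3 by (rule set_integrable_mult_right)
  show "set_integrable lborel {0<..} R"
    using set_integral_diff(1)[OF int1 int2] unfolding eq .
  have "laplace \<phi> (t + h) - laplace \<phi> t - h *\<^sub>R laplace (\<lambda>u. - of_real u * \<phi> u) t
      = (LBINT u:{0<..}. ?e (t + h) u * \<phi> u) - (LBINT u:{0<..}. ?e t u * \<phi> u)
        - of_real h * (LBINT u:{0<..}. ?e t u * (- of_real u * \<phi> u))"
    unfolding laplace_def scaleR_conv_of_real ..
  also have "\<dots> = (LBINT u:{0<..}. ?e (t + h) u * \<phi> u - ?e t u * \<phi> u)
        - (LBINT u:{0<..}. of_real h * (?e t u * (- of_real u * \<phi> u)))"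
    by (simp only: set_integral_diff(2)[OF i1 i2] set_integral_mult_right)
  also have "\<dots> = (LBINT u:{0<..}. R u)"
    by (simp only: set_integral_diff(2)[OF int1 int2, symmetric] eq)
  finally show "laplace \<phi> (t + h) - laplace \<phi> t - h *\<^sub>R laplace (\<lambda>u. - of_real u * \<phi> u) t
      = (LBINT u:{0<..}. R u)" .
qed

lemma laplace_taylor_bound:
  assumes phi: "laplace_dom \<phi>" and t: "t > 0" and h: "\<bar>h\<bar> < t / 2"
  shows "norm (laplace \<phi> (t + h) - laplace \<phi> t - h *\<^sub>R laplace (\<lambda>u. - of_real u * \<phi> u) t)
    \<le> 32 / t\<^sup>2 * (LBINT u:{0<..}. exp (- (t / 4 * u)) * norm (\<phi> u)) * h\<^sup>2"
proof -
  have th: "t + h > 0" using t h by linarith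
  have "norm (LBINT u:{0<..}. exp (- of_real (t * u)) * (of_real (exp (- h * u) - 1 + h * u) * \<phi> u))
      \<le> (LBINT u:{0<..}. 32 / t\<^sup>2 * h\<^sup>2 * (exp (- (t / 4 * u)) * norm (\<phi> u)))"
  proof (intro order.trans[OF set_integral_norm_bound] set_integral_mono set_integrable_norm
      laplace_first_order_remainder(1)[OF phi t th] set_integrable_mult_right
      laplace_dom_abs_integrable[OF phi])
    fix u :: real assume "u \<in> {0<..}"
    then have u: "u > 0" by simp
    have "- (t * u) + \<bar>h\<bar> * u \<le> - (t * u / 2)"
      using mult_right_mono[of "\<bar>h\<bar>" "t / 2" u] h u by linarith
    then have decay: "exp (- (t * u)) * exp (\<bar>h\<bar> * u) \<le> exp (- (t * u / 2))"
      by (simp flip: exp_add)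
    have "\<bar>exp (- h * u) - 1 + h * u\<bar> \<le> (h * u)\<^sup>2 / 2 * exp (\<bar>h\<bar> * u)"
      using abs_exp_minus_one_minus_le[of "- h * u"] u by (simp add: abs_mult)
    then have "exp (- (t * u)) * \<bar>exp (- h * u) - 1 + h * u\<bar>
        \<le> exp (- (t * u)) * ((h * u)\<^sup>2 / 2 * exp (\<bar>h\<bar> * u))"
      by (rule mult_left_mono) simp
    also have "\<dots> = h\<^sup>2 / 2 * u\<^sup>2 * (exp (- (t * u)) * exp (\<bar>h\<bar> * u))"
      by (simp add: power_mult_distrib mult_ac)
    also have "\<dots> \<le> h\<^sup>2 / 2 * (u\<^sup>2 * exp (- (t * u / 2)))"
      using decay by (simp add: mult_left_mono mult.assoc)
    also have "\<dots> \<le> h\<^sup>2 / 2 * (64 / t\<^sup>2 * exp (- (t * u / 4)))"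
      using t u by (intro mult_left_mono square_mult_exp_le) auto
    also have "\<dots> = 32 / t\<^sup>2 * h\<^sup>2 * exp (- (t / 4 * u))"
      by simp
    finally have "exp (- (t * u)) * \<bar>exp (- h * u) - 1 + h * u\<bar> * norm (\<phi> u)
        \<le> 32 / t\<^sup>2 * h\<^sup>2 * exp (- (t / 4 * u)) * norm (\<phi> u)"
      by (rule mult_right_mono) simp
    then show "norm (exp (- of_real (t * u)) * (of_real (exp (- h * u) - 1 + h * u) * \<phi> u))
        \<le> 32 / t\<^sup>2 * h\<^sup>2 * (exp (- (t / 4 * u)) * norm (\<phi> u))"
      unfolding norm_mult norm_of_real norm_exp_eq_Re by (simp add: mult_ac)
  qed (use t in auto)
  then show ?thesis
    unfolding laplace_first_order_remainder(2)[OF phi t th] set_integral_mult_right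
    by (simp only: mult_ac)
qed

lemma has_vector_derivative_quadratic_remainder:
  fixes f :: "real \<Rightarrow> 'a::real_normed_vector"
  assumes "\<delta> > 0" "C \<ge> 0" and bound: "\<And>h. \<bar>h\<bar> < \<delta> \<Longrightarrow> norm (f (t + h) - f t - h *\<^sub>R D) \<le> C * h\<^sup>2"
  shows "(f has_vector_derivative D) (at t)"
  unfolding has_vector_derivative_def has_derivative_at_alt
proof (intro conjI allI impI bounded_linear_scaleR_left)
  fix e :: real assume e: "e > 0"
  have "norm (f y - f t - (y - t) *\<^sub>R D) \<le> e * norm (y - t)"
    if "norm (y - t) < min \<delta> (e / (C + 1))" for y
  proof -
    have "norm (f y - f t - (y - t) *\<^sub>R D) \<le> C * \<bar>y - t\<bar> * \<bar>y - t\<bar>"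
      using bound[of "y - t"] that by (simp add: power2_eq_square mult.assoc)
    also have "\<dots> \<le> e * \<bar>y - t\<bar>"
    proof (intro mult_right_mono)
      have "C * \<bar>y - t\<bar> \<le> (C + 1) * (e / (C + 1))"
        using that assms(2) by (intro mult_mono) auto
      then show "C * \<bar>y - t\<bar> \<le> e" using assms(2) by simp
    qed simp
    finally show ?thesis by simp
  qed
  then show "\<exists>d>0. \<forall>y. norm (y - t) < d \<longrightarrow> norm (f y - f t - (y - t) *\<^sub>R D) \<le> e * norm (y - t)"
    using assms(1,2) e by (intro exI[of _ "min \<delta> (e / (C + 1))"]) auto
qed

theorem has_vector_derivative_laplace:
  assumes phi: "laplace_dom \<phi>" and t: "t > 0"
  shows "(laplace \<phi> has_vector_derivative laplace (\<lambda>u. - of_real u * \<phi> u) t) (at t)"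
proof (rule has_vector_derivative_quadratic_remainder[where \<delta>="t / 2"])
  show "0 \<le> 32 / t\<^sup>2 * (LBINT u:{0<..}. exp (- (t / 4 * u)) * norm (\<phi> u))"
    unfolding set_lebesgue_integral_def by (intro mult_nonneg_nonneg integral_nonneg_AE) auto
  show "norm (laplace \<phi> (t + h) - laplace \<phi> t - h *\<^sub>R laplace (\<lambda>u. - of_real u * \<phi> u) t)
    \<le> 32 / t\<^sup>2 * (LBINT u:{0<..}. exp (- (t / 4 * u)) * norm (\<phi> u)) * h\<^sup>2"
    if "\<bar>h\<bar> < t / 2" for h
    using that by (rule laplace_taylor_bound[OF phi t])
qed (use t in simp)

section \<open>The logarithmic series\<close>

text \<open>The density of (-1)^(k+1)/k \<Delta>_1^k f. For k = 0 it vanishes because x / 0 = 0, and so does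
  the k = 0 summand of log_weight_tail.\<close>
definition log_weight :: "nat \<Rightarrow> real \<Rightarrow> complex" where
  "log_weight k u = (-1) ^ (k + 1) / of_nat k * (of_real (exp (- u)) - 1) ^ k"

definition log_weight_tail :: "nat \<Rightarrow> real \<Rightarrow> real" where
  "log_weight_tail M u = u - (\<Sum>k<M. (1 - exp (- u)) ^ k / real k)"

lemma log_weight_0 [simp]: "log_weight 0 u = 0"
  by (simp add: log_weight_def)

lemma norm_log_weight: "u \<ge> 0 \<Longrightarrow> norm (log_weight k u) = (1 - exp (- u)) ^ k / real k"
  by (simp add: log_weight_def norm_mult norm_divide norm_power norm_of_real_exp_minus_one)

lemma norm_log_weight_le_one:
  assumes "u \<ge> 0"
  shows "norm (log_weight k u) \<le> 1"
proof (cases "k = 0")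
  case False
  have "(1 - exp (- u)) ^ k / real k \<le> (1 - exp (- u)) ^ k / 1"
    using False assms by (intro divide_left_mono) auto
  also have "\<dots> \<le> 1" using assms by (simp add: power_le_one)
  finally show ?thesis using assms by (simp add: norm_log_weight)
qed simp

lemma log_weight_sums:
  assumes "u > 0"
  shows "(\<lambda>k. log_weight k u) sums (- of_real u)"
proof -
  let ?z = "of_real (exp (- u)) - 1 :: complex"
  have "norm ?z < 1" using assms by (simp add: norm_of_real_exp_minus_one)
  then have "(\<lambda>k. (-1) ^ Suc k / of_nat k * ?z ^ k) sums ln (1 + ?z)" by (rule Ln_series)
  moreover have "ln (1 + ?z) = - of_real u"
    by (simp add: Ln_of_real flip: exp_of_real)
  ultimately show ?thesis by (simp add: log_weight_def)
qed

lemma log_one_minus_series: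
  assumes "u > 0"
  shows "(\<lambda>k. (1 - exp (- u)) ^ k / real k) sums u"
proof -
  have "\<bar>exp (- u) - 1\<bar> < 1" using assms by simp
  then have "(\<lambda>k. - ((- (exp (- u) - 1)) ^ k) / of_nat k) sums ln (1 + (exp (- u) - 1))"
    by (rule ln_series')
  then have "(\<lambda>k. - (- ((1 - exp (- u)) ^ k) / of_nat k)) sums - (- u)"
    by (intro sums_minus) simp
  then show ?thesis by simp
qed

lemma norm_log_weight_sums:
  assumes "u > 0"
  shows "(\<lambda>k. norm (log_weight k u)) sums u"
  using log_one_minus_series[OF assms] assms by (simp add: norm_log_weight)

lemma has_sum_atLeast_1_if_sums:
  fixes f :: "nat \<Rightarrow> 'a::banach"
  assumes "f sums s" "summable (\<lambda>k. norm (f k))" "f 0 = 0"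
  shows "(f has_sum s) {1..}"
proof -
  have "(f has_sum s) UNIV" using assms(2,1) by (rule norm_summable_imp_has_sum)
  then have "(f has_sum (s - sum f {0})) (UNIV - {0})"
    by (rule has_sum_Diff[OF _ has_sum_finite]) auto
  moreover have "UNIV - {0} = {1::nat..}" by auto
  ultimately show ?thesis using assms(3) by simp
qed

lemma has_sum_log_weight:
  assumes "u > 0"
  shows "((\<lambda>k. log_weight k u) has_sum (- of_real u)) {1..}"
  using norm_log_weight_sums[OF assms]
  by (intro has_sum_atLeast_1_if_sums log_weight_sums assms) (auto simp: sums_iff)

lemma log_weight_tail_has_sum:
  assumes "u > 0"
  shows "((\<lambda>k. norm (log_weight k u)) has_sum log_weight_tail M u) {M..}"
proof -
  have "((\<lambda>k. norm (log_weight k u)) has_sum u) UNIV"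
    using norm_log_weight_sums[OF assms] by (intro norm_summable_imp_has_sum) (auto simp: sums_iff)
  then have "((\<lambda>k. norm (log_weight k u)) has_sum (u - (\<Sum>k<M. norm (log_weight k u)))) (UNIV - {..<M})"
    by (intro has_sum_Diff has_sum_finite) auto
  moreover have "UNIV - {..<M} = {M..}" by auto
  ultimately show ?thesis
    using assms by (simp add: log_weight_tail_def norm_log_weight)
qed

lemma log_weight_tail_nonneg: "u > 0 \<Longrightarrow> 0 \<le> log_weight_tail M u"
  by (rule has_sum_nonneg[OF log_weight_tail_has_sum]) auto

lemma log_weight_tail_le: "u > 0 \<Longrightarrow> log_weight_tail M u \<le> u"
  by (simp add: log_weight_tail_def sum_nonneg)

lemma log_weight_tail_tendsto_0:
  assumes "u > 0"
  shows "(\<lambda>M. log_weight_tail M u) \<longlonglongrightarrow> 0"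
proof -
  have "(\<lambda>M. \<Sum>k<M. (1 - exp (- u)) ^ k / real k) \<longlonglongrightarrow> u"
    using log_one_minus_series[OF assms] unfolding sums_def .
  from tendsto_diff[OF tendsto_const[of u] this] show ?thesis
    by (simp add: log_weight_tail_def)
qed

lemma continuous_on_log_weight_tail: "continuous_on {0<..} (log_weight_tail M)"
  unfolding log_weight_tail_def divide_inverse by (auto intro!: continuous_intros)

lemma sum_norm_log_weight_le_tail:
  assumes "u > 0" "finite G" "G \<subseteq> {1..} - {1..<M}"
  shows "(\<Sum>k\<in>G. norm (log_weight k u)) \<le> log_weight_tail M u"
proof -
  have "G \<subseteq> {M..}" using assms(3) by auto
  then show ?thesis
    using assms(2) by (intro finite_sum_le_has_sum[OF log_weight_tail_has_sum[OF assms(1)]]) auto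
qed

lemma laplace_log_weight_tail_tendsto_0:
  assumes phi: "laplace_dom \<phi>" and t0: "t0 > 0"
  shows "(\<lambda>M. LBINT u:{0<..}. exp (- (t0 * u)) * norm (\<phi> u) * log_weight_tail M u) \<longlonglongrightarrow> 0"
    and "set_integrable lborel {0<..} (\<lambda>u. exp (- (t0 * u)) * norm (\<phi> u) * log_weight_tail M u)"
proof -
  let ?f = "\<lambda>M u. exp (- (t0 * u)) * norm (\<phi> u) * log_weight_tail M u"
  have "set_integrable lborel {0<..} (\<lambda>u. exp (- (t0 * u)) * norm (- of_real u * \<phi> u))"
    using laplace_dom_abs_integrable[OF laplace_dom_times_minus_u[OF phi] t0] .
  moreover have "set_integrable lborel {0<..} (\<lambda>u. exp (- (t0 * u)) * norm (- of_real u * \<phi> u))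
      = set_integrable lborel {0<..} (\<lambda>u. exp (- (t0 * u)) * norm (\<phi> u) * u)"
    by (intro set_integrable_cong) (auto simp: norm_mult)
  ultimately have dom: "set_integrable lborel {0<..} (\<lambda>u. exp (- (t0 * u)) * norm (\<phi> u) * u)"
    by simp
  have bound: "norm (?f M u) \<le> norm (exp (- (t0 * u)) * norm (\<phi> u) * u)" if "u > 0" for M u
    using that log_weight_tail_nonneg log_weight_tail_le by (auto simp: abs_mult intro!: mult_left_mono)
  have "set_borel_measurable lborel {0<..} (\<lambda>u. (exp (- (t0 * u)) * log_weight_tail M u) * norm (\<phi> u))"
    for M
    using phi unfolding laplace_dom_def
    by (intro set_borel_measurable_continuous_mult set_borel_measurable_norm)
       (simp_all add: continuous_on_log_weight_tail continuous_on_mult continuous_intros)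
  then have measurable: "set_borel_measurable lborel {0<..} (?f M)" for M
    by (simp add: mult_ac)
  show integrable: "set_integrable lborel {0<..} (?f M)" for M
    using bound by (intro set_integrable_bound[OF dom measurable]) auto
  have "(\<lambda>M. LBINT u. indicator {0<..} u *\<^sub>R ?f M u) \<longlonglongrightarrow> (LBINT u::real. 0)"
  proof (rule integral_dominated_convergence
      [where w="\<lambda>u. indicator {0<..} u *\<^sub>R (exp (- (t0 * u)) * norm (\<phi> u) * u)"])
    show "AE u in lborel. (\<lambda>M. indicator {0<..} u *\<^sub>R ?f M u) \<longlonglongrightarrow> 0"
      by (intro AE_I2) (auto intro!: tendsto_mult_right_zero log_weight_tail_tendsto_0
          simp: indicator_def)
    show "AE u in lborel. norm (indicator {0<..} u *\<^sub>R ?f M u)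
        \<le> indicator {0<..} u *\<^sub>R (exp (- (t0 * u)) * norm (\<phi> u) * u)" for M
      using bound by (auto simp: indicator_def)
  qed (use integrable dom in \<open>auto simp: set_integrable_def\<close>)
  then show "(\<lambda>M. LBINT u:{0<..}. ?f M u) \<longlonglongrightarrow> 0"
    by (simp add: set_lebesgue_integral_def)
qed

lemma laplace_series_log_weight:
  assumes phi: "laplace_dom \<phi>" and t0: "t0 > 0"
  shows "laplace_series \<phi> t0 {1..} log_weight"
proof
  fix \<epsilon> :: real assume "\<epsilon> > 0"
  then obtain M where M: "(LBINT u:{0<..}. exp (- (t0 * u)) * norm (\<phi> u) * log_weight_tail M u) < \<epsilon>"
    using order_tendstoD(2)[OF laplace_log_weight_tail_tendsto_0(1)[OF phi t0]]
    by (auto simp: eventually_sequentially)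
  then show "\<exists>F D. finite F \<and> F \<subseteq> {1..}
      \<and> set_integrable lborel {0<..} (\<lambda>u. exp (- (t0 * u)) * norm (\<phi> u) * D u)
      \<and> (LBINT u:{0<..}. exp (- (t0 * u)) * norm (\<phi> u) * D u) < \<epsilon>
      \<and> (\<forall>u>0. \<forall>G. finite G \<and> G \<subseteq> {1..} - F \<longrightarrow> (\<Sum>k\<in>G. norm (log_weight k u)) \<le> D u)"
    using laplace_log_weight_tail_tendsto_0(2)[OF phi t0] sum_norm_log_weight_le_tail
    by (intro exI[of _ "{1..<M}"] exI[of _ "log_weight_tail M"]) auto
next
  show "\<exists>B. \<forall>u>0. norm (log_weight k u) \<le> B" for k
    using norm_log_weight_le_one by (intro exI[of _ 1]) auto
qed (use phi t0 in \<open>auto simp: log_weight_def intro!: continuous_intros\<close>)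

lemma log_weight_fdiff:
  assumes "laplace_dom \<phi>" "t > 0"
  shows "(-1) ^ (k + 1) / of_nat k * (fdiff 1 ^^ k) (laplace \<phi>) t
    = laplace (\<lambda>u. log_weight k u * \<phi> u) t"
  using assms
  by (simp add: fdiff_power_laplace laplace_mult_left log_weight_def mult.assoc)

lemma abs_unif_conv_log_series_laplace:
  assumes "laplace_dom \<phi>" "compact K" "K \<subseteq> {0<..}"
  shows "abs_unif_conv K {1..} (\<lambda>k t. (-1) ^ (k + 1) / of_nat k * (fdiff 1 ^^ k) (laplace \<phi>) t)"
  using assms(2,3)
  by (intro abs_unif_conv_laplace_compact[OF laplace_series_log_weight[OF assms(1)]]
      log_weight_fdiff[OF assms(1)]) auto

lemma infsum_log_series_laplace:
  assumes "laplace_dom \<phi>" "t > 0"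
  shows "(\<Sum>\<^sub>\<infinity>k\<in>{1..}. (-1) ^ (k + 1) / of_nat k * (fdiff 1 ^^ k) (laplace \<phi>) t)
    = laplace (\<lambda>u. - of_real u * \<phi> u) t"
  using assms has_sum_log_weight
  by (intro infsum_laplace_series[OF laplace_series_log_weight[OF assms]] log_weight_fdiff
      laplace_dom_times_minus_u) auto

section \<open>The Bernoulli operator\<close>

definition bernoulli_weight ::
    "nat \<Rightarrow> (nat \<Rightarrow> nat) \<Rightarrow> ((nat \<Rightarrow> nat) \<Rightarrow> complex) \<Rightarrow> (nat \<Rightarrow> nat) \<Rightarrow> real \<Rightarrow> complex" where
  "bernoulli_weight N e c i u = mps_term N e c i (of_real (exp (- u)))"

lemma of_real_exp_power: "(of_real (exp (- u)) :: complex) ^ k = of_real (exp (- real k * u))"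
  by (simp flip: of_real_power exp_of_nat_mult)

lemma bernoulli_weight_eq:
  "bernoulli_weight N e c i u = c i * (\<Prod>j<N. (of_real (exp (- real (e j) * u)) - 1) ^ i j)"
  by (simp add: bernoulli_weight_def mps_term_def of_real_exp_power)

lemma continuous_on_bernoulli_weight: "continuous_on {0<..} (bernoulli_weight N e c i)"
  unfolding bernoulli_weight_eq[abs_def] by (intro continuous_intros)

lemma norm_bernoulli_weight_le:
  assumes "u > 0"
  shows "norm (bernoulli_weight N e c i u) \<le> norm (c i)"
proof -
  have "norm (\<Prod>j<N. (of_real (exp (- real (e j) * u)) - 1 :: complex) ^ i j) \<le> 1"
    unfolding prod_norm[symmetric] norm_power using assms
    by (intro prod_le_1) (auto intro!: power_le_one norm_exp_minus_one_le_one)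
  then show ?thesis
    unfolding bernoulli_weight_eq norm_mult by (simp add: mult_left_le)
qed

lemma mdiff_laplace_bernoulli_weight:
  assumes "laplace_dom \<phi>" "t > 0"
  shows "c i * mdiff N e i (laplace \<phi>) t = laplace (\<lambda>u. bernoulli_weight N e c i u * \<phi> u) t"
  using assms by (simp add: mdiff_laplace laplace_mult_left bernoulli_weight_eq mult.assoc)

context
  fixes N e c U F
  assumes expansion: "mps_expansion N e c U F"
begin

lemma exp_minus_mem_expansion_domain:
  assumes "u > 0"
  shows "of_real (exp (- u)) \<in> U - {1}"
proof -
  have "of_real ` {0<..1} \<subseteq> U" using expansion by (simp add: mps_expansion_def)
  moreover have "exp (- u) \<in> {0<..1}" "exp (- u) \<noteq> 1" using assms by auto
  ultimately show ?thesis by (metis DiffI image_subset_iff of_real_eq_1_iff singletonD)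
qed

lemma expansion_abs_unif_conv: "abs_unif_conv U (mps_index N) (mps_term N e c)"
  using expansion by (simp add: mps_expansion_def)

lemma summable_norm_bernoulli_weight:
  assumes "u > 0"
  shows "(\<lambda>i. norm (bernoulli_weight N e c i u)) summable_on mps_index N"
  using expansion_abs_unif_conv exp_minus_mem_expansion_domain[OF assms]
  unfolding abs_unif_conv_def bernoulli_weight_def by blast

lemma has_sum_bernoulli_weight:
  assumes "u > 0"
  shows "((\<lambda>i. bernoulli_weight N e c i u) has_sum F (of_real (exp (- u)))) (mps_index N)"
proof -
  have "F (of_real (exp (- u))) = (\<Sum>\<^sub>\<infinity>i\<in>mps_index N. bernoulli_weight N e c i u)"
    using expansion exp_minus_mem_expansion_domain[OF assms]
    unfolding mps_expansion_def bernoulli_weight_def by blast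
  then show ?thesis
    using has_sum_infsum[OF abs_summable_summable[OF summable_norm_bernoulli_weight[OF assms]]]
    by simp
qed

lemma bernoulli_weight_uniform_tail:
  assumes "\<epsilon> > 0"
  obtains I0 where "finite I0" "I0 \<subseteq> mps_index N"
    "\<And>u G. u > 0 \<Longrightarrow> finite G \<Longrightarrow> G \<subseteq> mps_index N - I0
      \<Longrightarrow> (\<Sum>i\<in>G. norm (bernoulli_weight N e c i u)) \<le> \<epsilon>"
proof -
  obtain I0 where I0: "finite I0" "I0 \<subseteq> mps_index N"
    "\<forall>z\<in>U. (\<Sum>\<^sub>\<infinity>i\<in>mps_index N - I0. norm (mps_term N e c i z)) < \<epsilon>"
    using expansion_abs_unif_conv assms unfolding abs_unif_conv_def by blast
  have "(\<Sum>i\<in>G. norm (bernoulli_weight N e c i u)) \<le> \<epsilon>"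
    if "u > 0" "finite G" "G \<subseteq> mps_index N - I0" for u G
  proof -
    let ?z = "of_real (exp (- u)) :: complex"
    have "?z \<in> U" using exp_minus_mem_expansion_domain[OF \<open>u > 0\<close>] by simp
    have "(\<lambda>i. norm (mps_term N e c i ?z)) summable_on mps_index N - I0"
      using summable_norm_bernoulli_weight[OF \<open>u > 0\<close>] unfolding bernoulli_weight_def
      by (rule summable_on_subset_banach) auto
    then have "(\<Sum>i\<in>G. norm (mps_term N e c i ?z)) \<le> (\<Sum>\<^sub>\<infinity>i\<in>mps_index N - I0. norm (mps_term N e c i ?z))"
      using that by (intro finite_sum_le_infsum) auto
    also have "\<dots> \<le> \<epsilon>" using I0(3) \<open>?z \<in> U\<close> by (simp add: less_imp_le)
    finally show ?thesis by (simp add: bernoulli_weight_def)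
  qed
  with I0(1,2) show ?thesis using that by blast
qed

lemma bounded_expansion_exp_minus: "\<exists>B. \<forall>u>0. norm (F (of_real (exp (- u)))) \<le> B"
proof -
  obtain I0 where I0: "finite I0" "I0 \<subseteq> mps_index N"
    "\<And>u G. u > 0 \<Longrightarrow> finite G \<Longrightarrow> G \<subseteq> mps_index N - I0
      \<Longrightarrow> (\<Sum>i\<in>G. norm (bernoulli_weight N e c i u)) \<le> 1"
    using bernoulli_weight_uniform_tail[of 1] by auto
  have "norm (F (of_real (exp (- u)))) \<le> (\<Sum>i\<in>I0. norm (c i)) + 1" if "u > 0" for u
  proof -
    let ?S = "\<Sum>i\<in>I0. bernoulli_weight N e c i u"
    have "norm (F (of_real (exp (- u)))) \<le> norm ?S + norm (?S - F (of_real (exp (- u))))"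
      using norm_triangle_ineq4[of ?S "?S - F (of_real (exp (- u)))"] by simp
    moreover have "norm (?S - F (of_real (exp (- u)))) \<le> 1"
      using I0 that by (intro has_sum_tail_bound[OF has_sum_bernoulli_weight]) auto
    moreover have "norm ?S \<le> (\<Sum>i\<in>I0. norm (c i))"
      using that by (intro order.trans[OF norm_sum sum_mono] norm_bernoulli_weight_le)
    ultimately show ?thesis by linarith
  qed
  then show ?thesis by blast
qed

lemma laplace_series_bernoulli_weight:
  assumes phi: "laplace_dom \<phi>" and t0: "t0 > 0"
  shows "laplace_series \<phi> t0 (mps_index N) (bernoulli_weight N e c)"
proof
  fix \<epsilon> :: real assume "\<epsilon> > 0"
  \<comment> \<open>the tails are uniformly small, so a constant dominating function suffices\<close>
  define \<Phi> where "\<Phi> = (LBINT u:{0<..}. exp (- (t0 * u)) * norm (\<phi> u))"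
  have \<Phi>_int: "set_integrable lborel {0<..} (\<lambda>u. exp (- (t0 * u)) * norm (\<phi> u))"
    using laplace_dom_abs_integrable[OF phi t0] .
  have "\<Phi> \<ge> 0"
    unfolding \<Phi>_def set_lebesgue_integral_def by (intro integral_nonneg_AE) auto
  define \<delta> where "\<delta> = \<epsilon> / (\<Phi> + 1)"
  have "\<delta> > 0" "\<Phi> * \<delta> < \<epsilon>"
    using \<open>\<epsilon> > 0\<close> \<open>\<Phi> \<ge> 0\<close> by (auto simp: \<delta>_def field_simps)
  obtain I0 where "finite I0" "I0 \<subseteq> mps_index N"
    "\<And>u G. u > 0 \<Longrightarrow> finite G \<Longrightarrow> G \<subseteq> mps_index N - I0
      \<Longrightarrow> (\<Sum>i\<in>G. norm (bernoulli_weight N e c i u)) \<le> \<delta>"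
    using bernoulli_weight_uniform_tail[OF \<open>\<delta> > 0\<close>] by blast
  then show "\<exists>F D. finite F \<and> F \<subseteq> mps_index N
      \<and> set_integrable lborel {0<..} (\<lambda>u. exp (- (t0 * u)) * norm (\<phi> u) * D u)
      \<and> (LBINT u:{0<..}. exp (- (t0 * u)) * norm (\<phi> u) * D u) < \<epsilon>
      \<and> (\<forall>u>0. \<forall>G. finite G \<and> G \<subseteq> mps_index N - F
          \<longrightarrow> (\<Sum>i\<in>G. norm (bernoulli_weight N e c i u)) \<le> D u)"
    using \<Phi>_int \<open>\<Phi> * \<delta> < \<epsilon>\<close> unfolding \<Phi>_def
    by (intro exI[of _ I0] exI[of _ "\<lambda>_. \<delta>"]) (auto simp: mult.commute)
next
  show "\<exists>B. \<forall>u>0. norm (bernoulli_weight N e c i u) \<le> B" for i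
    using norm_bernoulli_weight_le by blast
qed (use phi t0 continuous_on_bernoulli_weight in auto)

lemma bernoulli_dom_laplace:
  assumes "laplace_dom \<phi>"
  shows "bernoulli_dom N e c (laplace \<phi>)"
  unfolding bernoulli_dom_def
  by (intro allI impI abs_unif_conv_laplace_compact[OF laplace_series_bernoulli_weight[OF assms]]
      mdiff_laplace_bernoulli_weight[OF assms]) auto

lemma bernoulli_op_laplace:
  assumes "laplace_dom \<phi>" "laplace_dom (\<lambda>u. F (of_real (exp (- u))) * \<phi> u)" "t > 0"
  shows "bernoulli_op N e c (laplace \<phi>) t = laplace (\<lambda>u. F (of_real (exp (- u))) * \<phi> u) t"
  unfolding bernoulli_op_def using assms(2,3) has_sum_bernoulli_weight
  by (intro infsum_laplace_series[OF laplace_series_bernoulli_weight[OF assms(1)]]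
      mdiff_laplace_bernoulli_weight[OF assms(1)]) auto

end

lemma continuous_on_tame_exp:
  assumes "tame \<alpha> \<nu>"
  shows "continuous_on {0<..} (\<lambda>u::real. \<alpha> (exp (- of_real u)))"
proof -
  obtain r where "\<alpha> holomorphic_on (ball 0 1 \<union> ball 1 r) - {1}"
    using assms unfolding tame_def by blast
  then have "continuous_on (ball 0 1) \<alpha>"
    by (rule holomorphic_on_imp_continuous_on[OF holomorphic_on_subset]) auto
  then show ?thesis
    by (rule continuous_on_compose2) (auto intro!: continuous_intros simp: norm_exp_eq_Re)
qed

lemma expansion_at_exp_minus:
  fixes u :: real and \<alpha> :: "complex \<Rightarrow> complex"
  shows "(-1) ^ \<nu> * (Ln (of_real (exp (- u)))) ^ \<nu> * \<alpha> (of_real (exp (- u)))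
    = of_real u ^ \<nu> * \<alpha> (exp (- of_real u))"
proof -
  have exp_eq: "exp (- of_real u) = (of_real (exp (- u)) :: complex)"
    by (simp flip: exp_of_real)
  have Ln_eq: "Ln (of_real (exp (- u))) = - of_real u"
    by (simp add: Ln_of_real)
  show ?thesis unfolding exp_eq Ln_eq by (simp flip: power_mult_distrib)
qed

theorem mainTheorem8:
  fixes \<alpha> :: "complex \<Rightarrow> complex" and \<nu> N :: nat and e :: "nat \<Rightarrow> nat"
    and c :: "(nat \<Rightarrow> nat) \<Rightarrow> complex" and \<phi> :: "real \<Rightarrow> complex"
  assumes tame: "tame \<alpha> \<nu>"
    and expansion: "\<exists>U. mps_expansion N e c U (\<lambda>z. (-1) ^ \<nu> * (Ln z) ^ \<nu> * \<alpha> z)"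
    and phi: "laplace_dom \<phi>"
  defines "f \<equiv> laplace \<phi>"
    and "\<beta> \<equiv> (\<lambda>u::real. (of_real u) ^ \<nu> * \<alpha> (exp (- of_real u)))"
  shows "bernoulli_dom N e c f
    \<and> laplace_dom (\<lambda>u. \<beta> u * \<phi> u)
    \<and> (\<forall>t>0. bernoulli_op N e c f t = laplace (\<lambda>u. \<beta> u * \<phi> u) t)
    \<and> (\<forall>K. compact K \<and> K \<subseteq> {0<..} \<longrightarrow>
          abs_unif_conv K {1..} (\<lambda>k t. (-1) ^ (k + 1) / of_nat k * (fdiff 1 ^^ k) f t))
    \<and> laplace_dom (\<lambda>u. - of_real u * \<phi> u)
    \<and> (\<forall>t>0. (f has_vector_derivative laplace (\<lambda>u. - of_real u * \<phi> u) t) (at t)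
          \<and> (\<Sum>\<^sub>\<infinity>k\<in>{1..}. (-1) ^ (k + 1) / of_nat k * (fdiff 1 ^^ k) f t)
              = laplace (\<lambda>u. - of_real u * \<phi> u) t)
    \<and> (\<exists>\<psi>. laplace_dom \<psi> \<and> (\<forall>t>0. bernoulli_op N e c f t = laplace \<psi> t))"
proof -
  obtain U where U: "mps_expansion N e c U (\<lambda>z. (-1) ^ \<nu> * (Ln z) ^ \<nu> * \<alpha> z)"
    using expansion by blast
  have beta_eq: "\<beta> = (\<lambda>u. (-1) ^ \<nu> * (Ln (of_real (exp (- u)))) ^ \<nu> * \<alpha> (of_real (exp (- u))))"
    by (simp add: \<beta>_def expansion_at_exp_minus)
  obtain B where "\<forall>u>0. norm (\<beta> u) \<le> B"
    using bounded_expansion_exp_minus[OF U] unfolding beta_eq by blast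
  moreover have "continuous_on {0<..} \<beta>"
    unfolding \<beta>_def by (intro continuous_intros continuous_on_tame_exp[OF tame])
  ultimately have beta_dom: "laplace_dom (\<lambda>u. \<beta> u * \<phi> u)"
    by (intro laplace_dom_mult_bounded[OF phi]) auto
  have bernoulli_op: "bernoulli_op N e c f t = laplace (\<lambda>u. \<beta> u * \<phi> u) t" if "t > 0" for t
    using bernoulli_op_laplace[OF U phi _ that] beta_dom unfolding f_def beta_eq by blast
  show ?thesis
    using bernoulli_dom_laplace[OF U phi] beta_dom bernoulli_op
      abs_unif_conv_log_series_laplace[OF phi] laplace_dom_times_minus_u[OF phi]
      has_vector_derivative_laplace[OF phi] infsum_log_series_laplace[OF phi]
    unfolding f_def by (intro conjI allI impI exI[of _ "\<lambda>u. \<beta> u * \<phi> u"]) auto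
qed

end
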